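(* Sacks forcing $\mathbb{S}$ is weighted: for every $T\in\mathbb{S}$ there is a weight $\rho$ on $T$ such that every tree $S$ with $S\le_\rho T$ belongs to $\mathbb{S}$.
   Context: Sacks forcing $\mathbb{S}$ is the set of all perfect subtrees of $2^{<\omega}$ (trees in which every node has two incomparable extensions) ordered by inclusion. For a tree $T$ and $s\in T$, $T_s=\{t\in T:t\subseteq s\text{ or }s\subseteq t\}$. A weight on a perfect tree $T$ is a map $\rho:T\times T\to[T]^{<\omega}$ with $\rho(s,t)\subseteq T_s\setminus T_t$ for all $s,t\in T$. For a tree $S$, $S\le_\rho T$ means $S\subseteq T$ and the set of $s_0\in S$ for which there is an injective sequence $(s_n)_{n\in\omega}$ in $S_{s_0}$ (starting at $s_0$) with $\rho(s_n,s_{n+1})\subseteq S$ for all $n$ is dense in $S$. *)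

theory Defs
  imports Main "HOL-Library.Sublist"
begin

text \<open>Nodes of the full binary tree 2^{<omega} are finite bool lists; s \<subseteq> t (t extends s)
  is rendered as prefix s t.\<close>

definition is_tree :: "bool list set \<Rightarrow> bool" where
  "is_tree T \<longleftrightarrow> T \<noteq> {} \<and> (\<forall>t\<in>T. \<forall>s. prefix s t \<longrightarrow> s \<in> T)"

definition incomparable :: "bool list \<Rightarrow> bool list \<Rightarrow> bool" where
  "incomparable s t \<longleftrightarrow> \<not> prefix s t \<and> \<not> prefix t s"

definition perfect_tree :: "bool list set \<Rightarrow> bool" where
  "perfect_tree T \<longleftrightarrow> is_tree T \<and>
     (\<forall>s\<in>T. \<exists>t\<in>T. \<exists>u\<in>T. prefix s t \<and> prefix s u \<and> incomparable t u)"

definition Sacks :: "bool list set set" where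
  "Sacks = {T. perfect_tree T}"

definition restr :: "bool list set \<Rightarrow> bool list \<Rightarrow> bool list set" where
  "restr T s = {t\<in>T. prefix t s \<or> prefix s t}"

definition is_weight :: "bool list set \<Rightarrow> (bool list \<Rightarrow> bool list \<Rightarrow> bool list set) \<Rightarrow> bool" where
  "is_weight T \<rho> \<longleftrightarrow> (\<forall>s\<in>T. \<forall>t\<in>T. finite (\<rho> s t) \<and> \<rho> s t \<subseteq> restr T s - restr T t)"

definition good_nodes :: "(bool list \<Rightarrow> bool list \<Rightarrow> bool list set) \<Rightarrow> bool list set \<Rightarrow> bool list set" where
  "good_nodes \<rho> S = {s0\<in>S. \<exists>sq :: nat \<Rightarrow> bool list. inj sq \<and> sq 0 = s0 \<and>
      (\<forall>n. sq n \<in> restr S s0) \<and> (\<forall>n. \<rho> (sq n) (sq (Suc n)) \<subseteq> S)}"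

definition dense_in :: "bool list set \<Rightarrow> bool list set \<Rightarrow> bool" where
  "dense_in D S \<longleftrightarrow> (\<forall>s\<in>S. \<exists>d\<in>D. prefix s d)"

definition le_rho :: "(bool list \<Rightarrow> bool list \<Rightarrow> bool list set) \<Rightarrow> bool list set \<Rightarrow> bool list set \<Rightarrow> bool" where
  "le_rho \<rho> S T \<longleftrightarrow> S \<subseteq> T \<and> dense_in (good_nodes \<rho> S) S"

end

theory Submission
  imports Defs
begin

text \<open>The weight \<rho>(s, t) picks one node of T above s that is incomparable with t, if there is
  one. Let S \<le>_\<rho> T and let s_0 be a good node of S with witnessing sequence (s_n). If S had
  no splitting above s_0, then, since \<rho>(s_n, s_(n+1)) \<subseteq> S, no node of T above s_n could be
  incomparable with s_(n+1). Eventually the s_n extend s_0; so once some s_N lies below an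
  incomparable pair t_1, t_2 of T, every later s_n, being comparable with both, lies below both.
  That confines the injective sequence to the finitely many prefixes of t_1.\<close>

definition sacks_weight :: "bool list set \<Rightarrow> bool list \<Rightarrow> bool list \<Rightarrow> bool list set" where
  "sacks_weight T s t =
     (if \<exists>u\<in>T. prefix s u \<and> incomparable u t
      then {SOME u. u \<in> T \<and> prefix s u \<and> incomparable u t} else {})"

lemma sacks_weight_subset:
  "sacks_weight T s t \<subseteq> {u \<in> T. prefix s u \<and> incomparable u t}"
  unfolding sacks_weight_def
  using someI_ex[where P = "\<lambda>u. u \<in> T \<and> prefix s u \<and> incomparable u t"] by auto

lemma sacks_weight_witness:
  assumes "u \<in> T" "prefix s u" "incomparable u t"
  shows "\<exists>v\<in>sacks_weight T s t. prefix s v \<and> incomparable v t"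
proof -
  have "sacks_weight T s t \<noteq> {}"
    using assms by (auto simp: sacks_weight_def)
  then show ?thesis
    using sacks_weight_subset by blast
qed

lemma is_weight_sacks_weight: "is_weight T (sacks_weight T)"
  unfolding is_weight_def
proof (intro ballI conjI)
  fix s t
  show "finite (sacks_weight T s t)"
    by (simp add: sacks_weight_def)
  show "sacks_weight T s t \<subseteq> restr T s - restr T t"
    using sacks_weight_subset by (fastforce simp: restr_def incomparable_def)
qed

lemma prefix_of_incomparable_pair:
  assumes "incomparable t\<^sub>1 t\<^sub>2"
    and "\<not> incomparable t\<^sub>1 x" and "\<not> incomparable t\<^sub>2 x"
  shows "prefix x t\<^sub>1 \<and> prefix x t\<^sub>2"
  using assms unfolding incomparable_def
  by (meson prefix_order.trans prefix_same_cases)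

lemma finite_indices_prefix:
  fixes sq :: "nat \<Rightarrow> 'a list"
  assumes "inj sq"
  shows "finite {n. prefix (sq n) x}"
proof -
  have "finite (sq -` set (prefixes x))"
    using assms by (simp add: finite_vimageI)
  then show ?thesis
    by (simp add: in_set_prefixes vimage_def)
qed

lemma inj_seq_not_trapped_below_split:
  fixes sq :: "nat \<Rightarrow> bool list"
  assumes "inj sq"
    and "t\<^sub>1 \<in> T" "t\<^sub>2 \<in> T" "incomparable t\<^sub>1 t\<^sub>2" "prefix (sq N) t\<^sub>1" "prefix (sq N) t\<^sub>2"
    and step: "\<And>n u. n \<ge> N \<Longrightarrow> u \<in> T \<Longrightarrow> prefix (sq n) u \<Longrightarrow> \<not> incomparable u (sq (Suc n))"
  shows False
proof -
  have below: "prefix (sq n) t\<^sub>1 \<and> prefix (sq n) t\<^sub>2" if "n \<ge> N" for n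
    using that
  proof (induction n rule: dec_induct)
    case base
    then show ?case using assms by simp
  next
    case (step n)
    then show ?case
      using assms prefix_of_incomparable_pair by blast
  qed
  have "{N..} \<subseteq> {n. prefix (sq n) t\<^sub>1}"
    using below by auto
  then show False
    using finite_indices_prefix[OF \<open>inj sq\<close>] finite_subset infinite_Ici by blast
qed

lemma good_node_splits:
  assumes T: "perfect_tree T" and "S \<subseteq> T"
    and good: "s\<^sub>0 \<in> good_nodes (sacks_weight T) S"
  shows "\<exists>t\<in>S. \<exists>u\<in>S. prefix s\<^sub>0 t \<and> prefix s\<^sub>0 u \<and> incomparable t u"
proof (rule ccontr)
  assume no_split: "\<not> ?thesis"
  from good obtain sq :: "nat \<Rightarrow> bool list" where "inj sq"
    and comparable: "\<And>n. sq n \<in> restr S s\<^sub>0"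
    and weight_in_S: "\<And>n. sacks_weight T (sq n) (sq (Suc n)) \<subseteq> S"
    unfolding good_nodes_def by blast
  obtain N where "\<And>n. prefix (sq n) s\<^sub>0 \<Longrightarrow> n < N"
    using finite_indices_prefix[OF \<open>inj sq\<close>, of s\<^sub>0] finite_nat_set_iff_bounded by auto
  then have above: "sq n \<in> S \<and> prefix s\<^sub>0 (sq n)" if "n \<ge> N" for n
    using comparable[of n] that by (fastforce simp: restr_def)
  obtain t\<^sub>1 t\<^sub>2 where "t\<^sub>1 \<in> T" "t\<^sub>2 \<in> T" "incomparable t\<^sub>1 t\<^sub>2"
    "prefix (sq N) t\<^sub>1" "prefix (sq N) t\<^sub>2"
    using T above[of N] \<open>S \<subseteq> T\<close> unfolding perfect_tree_def by blast
  then show False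
  proof (rule inj_seq_not_trapped_below_split[OF \<open>inj sq\<close>])
    fix n u
    assume "n \<ge> N" "u \<in> T" "prefix (sq n) u"
    show "\<not> incomparable u (sq (Suc n))"
    proof
      assume "incomparable u (sq (Suc n))"
      then obtain v where "v \<in> S" "prefix (sq n) v" "incomparable v (sq (Suc n))"
        using sacks_weight_witness[OF \<open>u \<in> T\<close> \<open>prefix (sq n) u\<close>] weight_in_S by blast
      then show False
        using no_split above[of n] above[of "Suc n"] \<open>n \<ge> N\<close>
        by (meson le_SucI prefix_order.trans)
    qed
  qed
qed

lemma perfect_treeI_dense_splitting:
  assumes "is_tree S" and "dense_in D S"
    and "\<And>d. d \<in> D \<Longrightarrow> \<exists>t\<in>S. \<exists>u\<in>S. prefix d t \<and> prefix d u \<and> incomparable t u"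
  shows "perfect_tree S"
  using assms unfolding perfect_tree_def dense_in_def
  by (meson prefix_order.trans)

theorem lemma4p12:
  shows "\<forall>T\<in>Sacks. \<exists>\<rho>. is_weight T \<rho> \<and> (\<forall>S. is_tree S \<and> le_rho \<rho> S T \<longrightarrow> S \<in> Sacks)"
proof
  fix T
  assume "T \<in> Sacks"
  then have T: "perfect_tree T"
    by (simp add: Sacks_def)
  have "S \<in> Sacks" if "is_tree S" "le_rho (sacks_weight T) S T" for S
  proof -
    have "S \<subseteq> T" "dense_in (good_nodes (sacks_weight T) S) S"
      using that(2) by (auto simp: le_rho_def)
    then have "perfect_tree S"
      using perfect_treeI_dense_splitting[OF \<open>is_tree S\<close>] good_node_splits[OF T] by blast
    then show ?thesis
      by (simp add: Sacks_def)
  qed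
  then show "\<exists>\<rho>. is_weight T \<rho> \<and> (\<forall>S. is_tree S \<and> le_rho \<rho> S T \<longrightarrow> S \<in> Sacks)"
    using is_weight_sacks_weight by blast
qed

end
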